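(* $\deg_{\rm top}(R)=\deg_{\rm top}(\mathcal R)=8$.
   Context: The topological degree $\deg_{\rm top}$ of a rational map $\mathbb{CP}^2\dashrightarrow\mathbb{CP}^2$ is the number of preimages of a generic point. $R[U:V:W]=[(U^2+V^2)^2:V^2(U+W)^2:(V^2+W^2)^2]$ and $\mathcal R[Z:T:Y]=[Z^2(Z^2+T^2)^2:T^2(Z^2+Y^2)^2:(Z^2+T^2)(T^2Z^2+Y^4)]$ (in affine coordinates $z=Z/Y$, $t=T/Y$, $\mathcal R(z,t)=\big(\frac{z^2+t^2}{z^{-2}+t^2},\frac{z^2+z^{-2}+2}{z^2+z^{-2}+t^2+t^{-2}}\big)$). *)

theory Defs
  imports Complex_Main
begin

type_synonym pt3 = "complex \<times> complex \<times> complex"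

text \<open>Points of CP^2 are represented by nonzero vectors of C^3 up to nonzero scalars.\<close>

definition scale3 :: "complex \<Rightarrow> pt3 \<Rightarrow> pt3" where
  "scale3 c p = (case p of (x, y, z) \<Rightarrow> (c * x, c * y, c * z))"

definition proj_rel :: "(pt3 \<times> pt3) set" where
  "proj_rel = {(p, q). p \<noteq> (0,0,0) \<and> q \<noteq> (0,0,0) \<and> (\<exists>c. c \<noteq> 0 \<and> q = scale3 c p)}"

definition poly3 :: "(pt3 \<Rightarrow> complex) \<Rightarrow> bool" where
  "poly3 P \<longleftrightarrow> (\<exists>(c :: nat \<Rightarrow> nat \<Rightarrow> nat \<Rightarrow> complex) N.
      P = (\<lambda>(x, y, z). \<Sum>i\<le>N. \<Sum>j\<le>N. \<Sum>k\<le>N. c i j k * x ^ i * y ^ j * z ^ k))"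

definition num_preimages :: "(pt3 \<Rightarrow> pt3) \<Rightarrow> pt3 \<Rightarrow> nat" where
  "num_preimages F q =
     card ({p. p \<noteq> (0,0,0) \<and> F p \<noteq> (0,0,0) \<and> (F p, q) \<in> proj_rel} // proj_rel)"

text \<open>F has topological degree d: a generic point (outside the zero set of some nonzero
  polynomial, i.e. in a nonempty Zariski open set) has exactly d preimages.\<close>

definition has_top_degree :: "(pt3 \<Rightarrow> pt3) \<Rightarrow> nat \<Rightarrow> bool" where
  "has_top_degree F d \<longleftrightarrow>
     (\<exists>P. poly3 P \<and> P \<noteq> (\<lambda>_. 0) \<and>
        (\<forall>q. q \<noteq> (0,0,0) \<and> P q \<noteq> 0 \<longrightarrow> num_preimages F q = d))"

definition deg_top :: "(pt3 \<Rightarrow> pt3) \<Rightarrow> nat" where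
  "deg_top F = (THE d. has_top_degree F d)"

definition R_map :: "pt3 \<Rightarrow> pt3" where
  "R_map p = (case p of (U, V, W) \<Rightarrow>
     ((U^2 + V^2)^2, V^2 * (U + W)^2, (V^2 + W^2)^2))"

definition calR_map :: "pt3 \<Rightarrow> pt3" where
  "calR_map p = (case p of (Z, T, Y) \<Rightarrow>
     (Z^2 * (Z^2 + T^2)^2, T^2 * (Z^2 + Y^2)^2, (Z^2 + T^2) * (T^2 * Z^2 + Y^4)))"

end

theory Submission
  imports Defs "HOL-Computational_Algebra.Polynomial" "HOL-Library.Product_Plus"
begin

(*
  Both maps factor through the squaring map [a:b:c] -> [a^2:b^2:c^2], whose fibre over
  [a^2:b^2:c^2] with abc <> 0 consists of the four classes [a:+-b:+-c]. R_map is squaring after the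
  quadratic map R_quad, and calR_map is a cubic map after squaring. The other factor is generically
  two-to-one in both cases, and its two preimages are given by formulas involving a square root.
  So off the zero set of an explicit nonzero polynomial the fibre is parametrised by three signs
  and has 8 points. The degree is well defined because a product of two nonzero polynomial
  functions is nonzero, as one sees on the line through points where each factor is nonzero.
*)

section \<open>Polynomial functions\<close>

definition box3 :: "nat \<Rightarrow> (nat \<times> nat \<times> nat) set" where
  "box3 N = {..N} \<times> {..N} \<times> {..N}"

definition monom3 :: "nat \<times> nat \<times> nat \<Rightarrow> pt3 \<Rightarrow> complex" where
  "monom3 m p = fst p ^ fst m * fst (snd p) ^ fst (snd m) * snd (snd p) ^ snd (snd m)"

lemma finite_box3 [simp]: "finite (box3 N)"
  by (simp add: box3_def)

lemma box3_mono: "N \<le> M \<Longrightarrow> box3 N \<subseteq> box3 M"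
  by (auto simp: box3_def)

lemma add_mem_box3: "m \<in> box3 N \<Longrightarrow> n \<in> box3 M \<Longrightarrow> m + n \<in> box3 (N + M)"
  by (auto simp: box3_def)

lemma monom3_add: "monom3 (m + n) p = monom3 m p * monom3 n p"
  by (simp add: monom3_def power_add)

lemma poly3_iff_box3:
  "poly3 P \<longleftrightarrow> (\<exists>c N. \<forall>p. P p = (\<Sum>m\<in>box3 N. c m * monom3 m p))"
proof -
  have triple: "(\<lambda>(x, y, z). \<Sum>i\<le>N. \<Sum>j\<le>N. \<Sum>k\<le>N. c i j k * x ^ i * y ^ j * z ^ k) p
      = (\<Sum>m\<in>box3 N. case_prod (case_prod \<circ> c) m * monom3 m p)" for c N p
    by (cases p) (simp add: box3_def monom3_def sum.cartesian_product split_def mult.assoc)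
  show ?thesis
  proof
    assume "poly3 P"
    then show "\<exists>c N. \<forall>p. P p = (\<Sum>m\<in>box3 N. c m * monom3 m p)"
      unfolding poly3_def using triple by blast
  next
    assume "\<exists>c N. \<forall>p. P p = (\<Sum>m\<in>box3 N. c m * monom3 m p)"
    then obtain c N where "\<And>p. P p = (\<Sum>m\<in>box3 N. c m * monom3 m p)" by blast
    then have "P = (\<lambda>(x, y, z). \<Sum>i\<le>N. \<Sum>j\<le>N. \<Sum>k\<le>N. c (i, j, k) * x ^ i * y ^ j * z ^ k)"
      by (simp add: fun_eq_iff triple[of _ N] comp_def)
    then show "poly3 P"
      unfolding poly3_def by (intro exI[where x = "\<lambda>i j k. c (i, j, k)"] exI[where x = N])
  qed
qed

lemma box3_sum_extend:
  assumes "N \<le> M"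
  shows "(\<Sum>m\<in>box3 N. c m * monom3 m p) = (\<Sum>m\<in>box3 M. (if m \<in> box3 N then c m else 0) * monom3 m p)"
proof -
  have "(\<Sum>m\<in>box3 M. (if m \<in> box3 N then c m else 0) * monom3 m p)
      = (\<Sum>m\<in>box3 M. if m \<in> box3 N then c m * monom3 m p else 0)"
    by (intro sum.cong) auto
  also have "\<dots> = (\<Sum>m\<in>box3 N. c m * monom3 m p)"
    using box3_mono[OF assms] by (simp add: sum.inter_restrict[symmetric] Int_absorb1)
  finally show ?thesis ..
qed

lemma if_zero_mult: "(if P then a else 0) * b = (if P then a * b else (0::'a::mult_zero))"
  by simp

lemma poly3_monom3: "poly3 (\<lambda>p. c * monom3 m p)"
proof -
  obtain i j k where m: "m = (i, j, k)" by (cases m)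
  define d where "d n = (if n = m then c else 0)" for n
  have "m \<in> box3 (i + j + k)" by (simp add: m box3_def)
  then have "c * monom3 m p = (\<Sum>n\<in>box3 (i + j + k). d n * monom3 n p)" for p
    unfolding d_def
    by (simp add: if_zero_mult sum.delta)
  then show ?thesis
    unfolding poly3_iff_box3 by blast
qed

lemma poly3_add:
  assumes "poly3 P" "poly3 Q"
  shows "poly3 (\<lambda>p. P p + Q p)"
proof -
  obtain c N d M where
    P: "\<And>p. P p = (\<Sum>m\<in>box3 N. c m * monom3 m p)" and
    Q: "\<And>p. Q p = (\<Sum>m\<in>box3 M. d m * monom3 m p)"
    using assms unfolding poly3_iff_box3 by metis
  define e where "e m = (if m \<in> box3 N then c m else 0) + (if m \<in> box3 M then d m else 0)" for m
  have "P p + Q p = (\<Sum>m\<in>box3 (N + M). e m * monom3 m p)" for p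
    unfolding P Q box3_sum_extend[of N "N + M", OF le_add1] box3_sum_extend[of M "N + M", OF le_add2] e_def
    by (simp add: distrib_right sum.distrib)
  then show ?thesis
    unfolding poly3_iff_box3 by blast
qed

lemma poly3_mult:
  assumes "poly3 P" "poly3 Q"
  shows "poly3 (\<lambda>p. P p * Q p)"
proof -
  obtain c N d M where
    P: "\<And>p. P p = (\<Sum>m\<in>box3 N. c m * monom3 m p)" and
    Q: "\<And>p. Q p = (\<Sum>m\<in>box3 M. d m * monom3 m p)"
    using assms unfolding poly3_iff_box3 by metis
  define e where "e k = (\<Sum>m\<in>box3 N. \<Sum>n\<in>box3 M. if k = m + n then c m * d n else 0)" for k
  have "P p * Q p = (\<Sum>m\<in>box3 N. \<Sum>n\<in>box3 M. c m * d n * monom3 (m + n) p)" for p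
    unfolding P Q sum_product monom3_add by (simp add: ac_simps)
  also have "\<dots>p = (\<Sum>m\<in>box3 N. \<Sum>n\<in>box3 M. \<Sum>k\<in>box3 (N + M).
      (if k = m + n then c m * d n else 0) * monom3 k p)" for p
    by (simp add: if_zero_mult sum.delta add_mem_box3)
  also have "\<dots>p = (\<Sum>k\<in>box3 (N + M). e k * monom3 k p)" for p
    unfolding e_def sum_distrib_right by (simp add: sum.swap[of _ "box3 (N + M)"])
  finally show ?thesis
    unfolding poly3_iff_box3 by blast
qed

lemma poly3_const: "poly3 (\<lambda>_. c)"
  using poly3_monom3[of c "(0, 0, 0)"] by (simp add: monom3_def)

lemma poly3_coordinates: "poly3 fst" "poly3 (\<lambda>p. fst (snd p))" "poly3 (\<lambda>p. snd (snd p))"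
  using poly3_monom3[of 1 "(1, 0, 0)"] poly3_monom3[of 1 "(0, 1, 0)"] poly3_monom3[of 1 "(0, 0, 1)"]
  by (simp_all add: monom3_def)

lemma poly3_diff:
  assumes "poly3 P" "poly3 Q"
  shows "poly3 (\<lambda>p. P p - Q p)"
  using poly3_add[OF assms(1) poly3_mult[OF poly3_const[of "-1"] assms(2)]] by simp

lemma poly3_power:
  assumes "poly3 P"
  shows "poly3 (\<lambda>p. P p ^ n)"
  by (induction n) (simp_all add: poly3_const poly3_mult[OF assms])

lemmas poly3_intros = poly3_const poly3_coordinates poly3_add poly3_diff poly3_mult poly3_power

lemma poly3_along_poly_curve:
  assumes "poly3 P"
  obtains r where "\<And>t. P (poly f t, poly g t, poly h t) = poly r t"
proof -
  obtain c N where P: "\<And>p. P p = (\<Sum>m\<in>box3 N. c m * monom3 m p)"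
    using assms unfolding poly3_iff_box3 by metis
  define r where "r = (\<Sum>m\<in>box3 N. smult (c m) (f ^ fst m * g ^ fst (snd m) * h ^ snd (snd m)))"
  have "P (poly f t, poly g t, poly h t) = poly r t" for t
    unfolding P r_def by (simp add: poly_sum monom3_def)
  then show thesis
    using that by blast
qed

lemma poly3_mult_nonzero:
  assumes "poly3 P" "poly3 Q" "P \<noteq> (\<lambda>_. 0)" "Q \<noteq> (\<lambda>_. 0)"
  shows "(\<lambda>p. P p * Q p) \<noteq> (\<lambda>_. 0)"
proof -
  obtain a b where a: "P a \<noteq> 0" and b: "Q b \<noteq> 0"
    using assms(3,4) by fastforce
  define line where "line v w = [:v, w - v:]" for v w :: complex
  have line_01: "poly (line v w) 0 = v" "poly (line v w) 1 = w" for v w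
    by (simp_all add: line_def)
  define f g h where "f = line (fst a) (fst b)" and "g = line (fst (snd a)) (fst (snd b))"
    and "h = line (snd (snd a)) (snd (snd b))"
  obtain r where r: "\<And>t. P (poly f t, poly g t, poly h t) = poly r t"
    using poly3_along_poly_curve[OF assms(1), where f = f and g = g and h = h] by blast
  obtain s where s: "\<And>t. Q (poly f t, poly g t, poly h t) = poly s t"
    using poly3_along_poly_curve[OF assms(2), where f = f and g = g and h = h] by blast
  have "r \<noteq> 0"
    using r[of 0] a by (auto simp: f_def g_def h_def line_01)
  moreover have "s \<noteq> 0"
    using s[of 1] b by (auto simp: f_def g_def h_def line_01)
  ultimately have "r * s \<noteq> 0"
    by simp
  then obtain t where "poly (r * s) t \<noteq> 0"
    using poly_all_0_iff_0 by blast
  then have "P (poly f t, poly g t, poly h t) * Q (poly f t, poly g t, poly h t) \<noteq> 0"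
    by (simp add: r s)
  then show ?thesis
    by (metis (mono_tags))
qed

lemma has_top_degree_unique:
  assumes "has_top_degree F d" "has_top_degree F d'"
  shows "d = d'"
proof -
  obtain P where P: "poly3 P" "P \<noteq> (\<lambda>_. 0)"
    "\<And>q. q \<noteq> (0, 0, 0) \<Longrightarrow> P q \<noteq> 0 \<Longrightarrow> num_preimages F q = d"
    using assms(1) unfolding has_top_degree_def by blast
  obtain Q where Q: "poly3 Q" "Q \<noteq> (\<lambda>_. 0)"
    "\<And>q. q \<noteq> (0, 0, 0) \<Longrightarrow> Q q \<noteq> 0 \<Longrightarrow> num_preimages F q = d'"
    using assms(2) unfolding has_top_degree_def by blast
  \<comment> \<open>The factor \<open>fst\<close> keeps the common nonzero point away from the origin.\<close>
  have "fst \<noteq> (\<lambda>_::pt3. 0::complex)"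
    by (metis fst_conv one_neq_zero)
  then have "(\<lambda>q. P q * Q q * fst q) \<noteq> (\<lambda>_. 0)"
    using P Q by (intro poly3_mult_nonzero poly3_mult poly3_coordinates)
  then obtain q where "P q * Q q * fst q \<noteq> 0"
    by meson
  then have "q \<noteq> (0, 0, 0)" "P q \<noteq> 0" "Q q \<noteq> 0"
    by auto
  then show ?thesis
    using P(3) Q(3) by metis
qed

lemma has_top_degreeI:
  assumes "poly3 P" "P a \<noteq> 0" "\<And>q. P q \<noteq> 0 \<Longrightarrow> num_preimages F q = d"
  shows "has_top_degree F d"
  unfolding has_top_degree_def using assms by (metis (mono_tags))

lemma deg_top_eqI: "has_top_degree F d \<Longrightarrow> deg_top F = d"
  unfolding deg_top_def using has_top_degree_unique by blast

section \<open>Counting projective preimages\<close>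

lemma scale3_scale3 [simp]: "scale3 c (scale3 d p) = scale3 (c * d) p"
  by (cases p) (simp add: scale3_def)

lemma scale3_1 [simp]: "scale3 1 p = p"
  by (cases p) (simp add: scale3_def)

lemma scale3_eq_0_iff: "scale3 c p = (0, 0, 0) \<longleftrightarrow> c = 0 \<or> p = (0, 0, 0)"
  by (cases p) (auto simp: scale3_def)

lemma proj_rel_refl: "p \<noteq> (0, 0, 0) \<Longrightarrow> (p, p) \<in> proj_rel"
  unfolding proj_rel_def by (auto intro: exI[of _ 1])

lemma proj_rel_sym: "(p, q) \<in> proj_rel \<Longrightarrow> (q, p) \<in> proj_rel"
  unfolding proj_rel_def
proof clarify
  fix c :: complex
  assume "p \<noteq> (0, 0, 0)" "c \<noteq> 0"
  then show "\<exists>d. d \<noteq> 0 \<and> p = scale3 d (scale3 c p)"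
    by (intro exI[of _ "1 / c"]) simp
qed

lemma proj_rel_trans: "(p, q) \<in> proj_rel \<Longrightarrow> (q, r) \<in> proj_rel \<Longrightarrow> (p, r) \<in> proj_rel"
  unfolding proj_rel_def by clarsimp (metis mult_eq_0_iff)

lemma proj_rel_scale3: "p \<noteq> (0, 0, 0) \<Longrightarrow> c \<noteq> 0 \<Longrightarrow> (p, scale3 c p) \<in> proj_rel"
  unfolding proj_rel_def by (auto simp: scale3_eq_0_iff)

lemma num_preimages_eq_card:
  fixes F :: "pt3 \<Rightarrow> pt3" and q :: pt3 and g :: "'i \<Rightarrow> pt3"
  defines "A \<equiv> {p. p \<noteq> (0, 0, 0) \<and> F p \<noteq> (0, 0, 0) \<and> (F p, q) \<in> proj_rel}"
  assumes "finite I"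
    and mem: "\<And>i. i \<in> I \<Longrightarrow> g i \<in> A"
    and inj: "\<And>i j. i \<in> I \<Longrightarrow> j \<in> I \<Longrightarrow> (g i, g j) \<in> proj_rel \<Longrightarrow> i = j"
    and cover: "\<And>p. p \<in> A \<Longrightarrow> \<exists>i\<in>I. (p, g i) \<in> proj_rel"
  shows "num_preimages F q = card I"
proof -
  have class_eq: "proj_rel `` {p} = proj_rel `` {p'}" if "(p, p') \<in> proj_rel" for p p'
    using that proj_rel_sym proj_rel_trans by blast
  have "A // proj_rel = (\<lambda>i. proj_rel `` {g i}) ` I"
  proof
    show "A // proj_rel \<subseteq> (\<lambda>i. proj_rel `` {g i}) ` I"
      unfolding quotient_def using cover class_eq by blast
    show "(\<lambda>i. proj_rel `` {g i}) ` I \<subseteq> A // proj_rel"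
      unfolding quotient_def using mem by blast
  qed
  moreover have "inj_on (\<lambda>i. proj_rel `` {g i}) I"
  proof (rule inj_onI)
    fix i j
    assume ij: "i \<in> I" "j \<in> I" "proj_rel `` {g i} = proj_rel `` {g j}"
    have "g j \<in> proj_rel `` {g j}"
      using mem[OF ij(2)] proj_rel_refl unfolding A_def by blast
    then show "i = j"
      using inj ij by blast
  qed
  ultimately show ?thesis
    unfolding num_preimages_def A_def[symmetric] by (simp add: card_image)
qed

definition pm :: "bool \<Rightarrow> complex" where
  "pm b = (if b then 1 else -1)"

lemma pm_square [simp]: "(pm b)\<^sup>2 = 1"
  by (auto simp: pm_def power2_eq_square)

lemma pm_eq_iff [simp]: "pm b = pm b' \<longleftrightarrow> b = b'"
  by (auto simp: pm_def)

lemma pm_cancel: "pm b * s = pm b' * s \<Longrightarrow> s \<noteq> 0 \<Longrightarrow> b = b'"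
  by (cases b; cases b') (auto simp: pm_def)

lemma square_eq_square_pm: "(x::complex)\<^sup>2 = s\<^sup>2 \<Longrightarrow> \<exists>b. x = pm b * s"
  by (metis power2_eq_iff mult_1 mult_minus1 pm_def)

lemma square_eq_pm_csqrt: "(x::complex)\<^sup>2 = s \<Longrightarrow> \<exists>b. x = pm b * csqrt s"
  using square_eq_square_pm[of x "csqrt s"] by simp

lemma card_bool3: "card (UNIV :: (bool \<times> bool \<times> bool) set) = 8"
  by (simp add: UNIV_Times_UNIV[symmetric] card_cartesian_product del: UNIV_Times_UNIV)

section \<open>The map R\<close>

definition R_quad :: "pt3 \<Rightarrow> pt3" where
  "R_quad p = (case p of (U, V, W) \<Rightarrow> (U\<^sup>2 + V\<^sup>2, V * (U + W), V\<^sup>2 + W\<^sup>2))"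

lemma R_map_eq_squares: "R_map p = (case R_quad p of (a, b, c) \<Rightarrow> (a\<^sup>2, b\<^sup>2, c\<^sup>2))"
  by (cases p) (simp add: R_map_def R_quad_def power_mult_distrib)

lemma R_quad_scale3: "R_quad (scale3 k p) = scale3 (k\<^sup>2) (R_quad p)"
  by (cases p) (simp add: R_quad_def scale3_def algebra_simps power2_eq_square)

text \<open>If \<open>R_quad (U, V, W) = (a, b, c)\<close> then \<open>a c - b\<^sup>2 = (U W - V\<^sup>2)\<^sup>2\<close>, so \<open>(U + W)\<^sup>2\<close> is one of
  the two values \<open>UW_sum_sq a b c d\<close>; then \<open>V = b / (U + W)\<close> and \<open>U - W = (a - c) / (U + W)\<close>.\<close>

definition UW_sum_sq :: "complex \<Rightarrow> complex \<Rightarrow> complex \<Rightarrow> bool \<Rightarrow> complex" where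
  "UW_sum_sq a b c d = a + c + 2 * pm d * csqrt (a * c - b\<^sup>2)"

definition R_quad_inv :: "complex \<Rightarrow> complex \<Rightarrow> complex \<Rightarrow> bool \<Rightarrow> pt3" where
  "R_quad_inv a b c d =
     (let S = csqrt (UW_sum_sq a b c d) in ((S + (a - c) / S) / 2, b / S, (S - (a - c) / S) / 2))"

lemma UW_sum_sq_equation:
  "(UW_sum_sq a b c d)\<^sup>2 - 2 * (a + c) * UW_sum_sq a b c d + (a - c)\<^sup>2 + 4 * b\<^sup>2 = 0"
proof -
  have "(UW_sum_sq a b c d)\<^sup>2 - 2 * (a + c) * UW_sum_sq a b c d + (a - c)\<^sup>2 + 4 * b\<^sup>2
      = 4 * (pm d)\<^sup>2 * (csqrt (a * c - b\<^sup>2))\<^sup>2 - 4 * (a * c - b\<^sup>2)"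
    by (simp add: UW_sum_sq_def power2_eq_square algebra_simps)
  then show ?thesis
    by simp
qed

lemma UW_sum_sq_nonzero:
  assumes "(a - c)\<^sup>2 + 4 * b\<^sup>2 \<noteq> 0"
  shows "UW_sum_sq a b c d \<noteq> 0"
  using UW_sum_sq_equation[of a b c d] assms by auto

lemma R_quad_R_quad_inv:
  assumes "(a - c)\<^sup>2 + 4 * b\<^sup>2 \<noteq> 0"
  shows "R_quad (R_quad_inv a b c d) = (a, b, c)"
proof -
  define S where "S = csqrt (UW_sum_sq a b c d)"
  have S0: "S \<noteq> 0"
    using UW_sum_sq_nonzero[OF assms] by (auto simp: S_def)
  have key: "(S\<^sup>2)\<^sup>2 - 2 * (a + c) * S\<^sup>2 + (a - c)\<^sup>2 + 4 * b\<^sup>2 = 0"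
    unfolding S_def power2_csqrt by (rule UW_sum_sq_equation)
  have "4 * S\<^sup>2 * (((S + (a - c) / S) / 2)\<^sup>2 + (b / S)\<^sup>2 - a)
      = (S\<^sup>2)\<^sup>2 - 2 * (a + c) * S\<^sup>2 + (a - c)\<^sup>2 + 4 * b\<^sup>2"
    using S0 by (simp add: field_simps power2_eq_square)
  then have "((S + (a - c) / S) / 2)\<^sup>2 + (b / S)\<^sup>2 = a"
    using S0 key by simp
  moreover have "4 * S\<^sup>2 * ((b / S)\<^sup>2 + ((S - (a - c) / S) / 2)\<^sup>2 - c)
      = (S\<^sup>2)\<^sup>2 - 2 * (a + c) * S\<^sup>2 + (a - c)\<^sup>2 + 4 * b\<^sup>2"
    using S0 by (simp add: field_simps power2_eq_square)
  then have "(b / S)\<^sup>2 + ((S - (a - c) / S) / 2)\<^sup>2 = c"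
    using S0 key by simp
  moreover have "b / S * ((S + (a - c) / S) / 2 + (S - (a - c) / S) / 2) = b"
    using S0 by (simp add: field_simps)
  ultimately show ?thesis
    by (simp add: R_quad_inv_def R_quad_def Let_def S_def)
qed

lemma R_quad_inv_sum: "fst (R_quad_inv a b c d) + snd (snd (R_quad_inv a b c d)) = csqrt (UW_sum_sq a b c d)"
  by (simp add: R_quad_inv_def Let_def field_simps)

lemma R_quad_inv_eqI:
  assumes "R_quad (U, V, W) = (a, b, c)" "U + W = csqrt (UW_sum_sq a b c d)" "U + W \<noteq> 0"
  shows "(U, V, W) = R_quad_inv a b c d"
proof -
  have "a = U\<^sup>2 + V\<^sup>2" "b = V * (U + W)" "c = V\<^sup>2 + W\<^sup>2"
    using assms(1) by (auto simp: R_quad_def)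
  then have "(a - c) / (U + W) = U - W" "b / (U + W) = V"
    using assms(3) by (simp_all add: field_simps power2_eq_square)
  then show ?thesis
    unfolding R_quad_inv_def Let_def assms(2)[symmetric] by (simp add: field_simps)
qed

lemma R_quad_fiber:
  assumes "R_quad p = (a, b, c)" "b \<noteq> 0"
  obtains d where "p = R_quad_inv a b c d \<or> p = scale3 (-1) (R_quad_inv a b c d)"
proof -
  obtain U V W where p: "p = (U, V, W)"
    by (cases p)
  have abc: "a = U\<^sup>2 + V\<^sup>2" "b = V * (U + W)" "c = V\<^sup>2 + W\<^sup>2"
    using assms(1) by (auto simp: R_quad_def p)
  have UW: "U + W \<noteq> 0" "-U + -W \<noteq> 0"
    using assms(2) abc(2) by auto
  have "((U + W)\<^sup>2 - (a + c))\<^sup>2 = (2 * csqrt (a * c - b\<^sup>2))\<^sup>2"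
    unfolding abc by (simp add: power_mult_distrib) (simp add: power2_eq_square algebra_simps)
  then obtain d where "(U + W)\<^sup>2 - (a + c) = pm d * (2 * csqrt (a * c - b\<^sup>2))"
    using square_eq_square_pm by blast
  then have "(U + W)\<^sup>2 = UW_sum_sq a b c d"
    by (simp add: UW_sum_sq_def algebra_simps)
  then obtain e where e: "U + W = pm e * csqrt (UW_sum_sq a b c d)"
    using square_eq_pm_csqrt by blast
  show thesis
  proof (cases e)
    case True
    then have "p = R_quad_inv a b c d"
      using R_quad_inv_eqI assms(1) UW e unfolding p by (simp add: pm_def)
    then show thesis
      using that by blast
  next
    case False
    have "R_quad (-U, -V, -W) = (a, b, c)"
      using assms(1) unfolding p by (simp add: R_quad_def algebra_simps)
    moreover have "-(U + W) = csqrt (UW_sum_sq a b c d)"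
      using e False by (simp add: pm_def)
    then have "-U + -W = csqrt (UW_sum_sq a b c d)"
      by simp
    ultimately have inv: "(-U, -V, -W) = R_quad_inv a b c d"
      using UW(2) by (rule R_quad_inv_eqI)
    have "p = scale3 (-1) (R_quad_inv a b c d)"
      unfolding p inv[symmetric] by (simp add: scale3_def)
    then show thesis
      using that by blast
  qed
qed

definition R_degeneracy :: "pt3 \<Rightarrow> complex" where
  "R_degeneracy = (\<lambda>(q1, q2, q3). q1 * q2 * q3 * (q1 * q3 - q2\<^sup>2) * ((q1 + q3 + 4 * q2)\<^sup>2 - 4 * q1 * q3))"

lemma poly3_R_degeneracy: "poly3 R_degeneracy"
  unfolding R_degeneracy_def case_prod_unfold by (intro poly3_intros)

lemma R_degeneracy_nonzero_imp:
  assumes "R_degeneracy (a\<^sup>2, b\<^sup>2, c\<^sup>2) \<noteq> 0"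
  shows "a \<noteq> 0" "b \<noteq> 0" "c \<noteq> 0" "a * c \<noteq> b\<^sup>2" "(a - c)\<^sup>2 + 4 * b\<^sup>2 \<noteq> 0"
proof -
  have nz: "a \<noteq> 0" "b \<noteq> 0" "c \<noteq> 0" "a\<^sup>2 * c\<^sup>2 \<noteq> (b\<^sup>2)\<^sup>2" "(a\<^sup>2 + c\<^sup>2 + 4 * b\<^sup>2)\<^sup>2 \<noteq> 4 * a\<^sup>2 * c\<^sup>2"
    using assms by (auto simp: R_degeneracy_def)
  show "a \<noteq> 0" "b \<noteq> 0" "c \<noteq> 0"
    using nz by auto
  show "a * c \<noteq> b\<^sup>2"
    using nz(4) by (metis power_mult_distrib)
  show "(a - c)\<^sup>2 + 4 * b\<^sup>2 \<noteq> 0"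
  proof
    assume "(a - c)\<^sup>2 + 4 * b\<^sup>2 = 0"
    then have "a\<^sup>2 + c\<^sup>2 + 4 * b\<^sup>2 = 2 * a * c"
      by (simp add: power2_eq_square algebra_simps)
    then show False
      using nz(5) by (simp add: power2_eq_square algebra_simps)
  qed
qed

definition R_fiber_point :: "pt3 \<Rightarrow> bool \<times> bool \<times> bool \<Rightarrow> pt3" where
  "R_fiber_point = (\<lambda>(q1, q2, q3) (sb, sc, d). R_quad_inv (csqrt q1) (pm sb * csqrt q2) (pm sc * csqrt q3) d)"

lemma R_degeneracy_nonzero_csqrt:
  assumes "R_degeneracy (q1, q2, q3) \<noteq> 0"
  shows "csqrt q1 \<noteq> 0" "pm sb * csqrt q2 \<noteq> 0" "pm sc * csqrt q3 \<noteq> 0"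
    "csqrt q1 * (pm sc * csqrt q3) \<noteq> (pm sb * csqrt q2)\<^sup>2"
    "(csqrt q1 - pm sc * csqrt q3)\<^sup>2 + 4 * (pm sb * csqrt q2)\<^sup>2 \<noteq> 0"
  using R_degeneracy_nonzero_imp[of "csqrt q1" "pm sb * csqrt q2" "pm sc * csqrt q3"] assms
  by (simp_all add: power_mult_distrib)

lemma R_fiber_point_mem:
  assumes "R_degeneracy (q1, q2, q3) \<noteq> 0"
  shows "R_quad (R_fiber_point (q1, q2, q3) i) = (csqrt q1, pm (fst i) * csqrt q2, pm (fst (snd i)) * csqrt q3)"
    and "R_fiber_point (q1, q2, q3) i \<noteq> (0, 0, 0)"
    and "R_map (R_fiber_point (q1, q2, q3) i) = (q1, q2, q3)"
proof -
  obtain sb sc d where i: "i = (sb, sc, d)"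
    by (cases i)
  note generic = R_degeneracy_nonzero_csqrt[OF assms]
  show quad: "R_quad (R_fiber_point (q1, q2, q3) i) = (csqrt q1, pm (fst i) * csqrt q2, pm (fst (snd i)) * csqrt q3)"
    using R_quad_R_quad_inv[OF generic(5)[where sb = sb and sc = sc]] by (simp add: i R_fiber_point_def)
  then show "R_fiber_point (q1, q2, q3) i \<noteq> (0, 0, 0)"
    using generic(2)[of sb] by (auto simp: i R_quad_def)
  show "R_map (R_fiber_point (q1, q2, q3) i) = (q1, q2, q3)"
    unfolding R_map_eq_squares quad by (simp add: power_mult_distrib)
qed

lemma R_fiber_point_inj:
  assumes "R_degeneracy (q1, q2, q3) \<noteq> 0"
    and "(R_fiber_point (q1, q2, q3) i, R_fiber_point (q1, q2, q3) j) \<in> proj_rel"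
  shows "i = j"
proof -
  obtain sb sc d sb' sc' d' where i: "i = (sb, sc, d)" and j: "j = (sb', sc', d')"
    by (cases i; cases j)
  obtain k where k: "R_fiber_point (q1, q2, q3) j = scale3 k (R_fiber_point (q1, q2, q3) i)"
    using assms(2) unfolding proj_rel_def by blast
  note generic = R_degeneracy_nonzero_csqrt[OF assms(1)]
  have "R_quad (R_fiber_point (q1, q2, q3) j) = scale3 (k\<^sup>2) (R_quad (R_fiber_point (q1, q2, q3) i))"
    by (simp add: k R_quad_scale3)
  then have quad: "csqrt q1 = k\<^sup>2 * csqrt q1" "pm sb' * csqrt q2 = k\<^sup>2 * (pm sb * csqrt q2)"
      "pm sc' * csqrt q3 = k\<^sup>2 * (pm sc * csqrt q3)"
    unfolding R_fiber_point_mem[OF assms(1)] by (simp_all add: i j scale3_def)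
  have k2: "k\<^sup>2 = 1"
    using quad(1) generic(1) by simp
  have e: "sb' = sb" "sc' = sc"
    using quad(2,3) k2 generic(2)[of True] generic(3)[of True] by auto
  define a b c where "a = csqrt q1" and "b = pm sb * csqrt q2" and "c = pm sc * csqrt q3"
  have "csqrt (UW_sum_sq a b c d') = k * csqrt (UW_sum_sq a b c d)"
    using k unfolding R_quad_inv_sum[symmetric]
    by (cases "R_quad_inv a b c d") (simp add: i j e a_def b_def c_def R_fiber_point_def scale3_def algebra_simps)
  then have "UW_sum_sq a b c d' = UW_sum_sq a b c d"
    using k2 by (metis power2_csqrt power_mult_distrib mult_1)
  then have "pm d' * csqrt (a * c - b\<^sup>2) = pm d * csqrt (a * c - b\<^sup>2)"
    by (simp add: UW_sum_sq_def)
  moreover have "csqrt (a * c - b\<^sup>2) \<noteq> 0"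
    using generic(4) by (simp add: a_def b_def c_def)
  ultimately have "d' = d"
    by (rule pm_cancel)
  then show "i = j"
    using i j e by simp
qed

lemma R_preimage_rescale:
  assumes "R_degeneracy (q1, q2, q3) \<noteq> 0" "(R_map p, (q1, q2, q3)) \<in> proj_rel"
  obtains m sb sc where "m \<noteq> 0" "R_quad (scale3 m p) = (csqrt q1, pm sb * csqrt q2, pm sc * csqrt q3)"
proof -
  obtain \<kappa> where "(q1, q2, q3) = scale3 \<kappa> (R_map p)"
    using assms(2) unfolding proj_rel_def by blast
  moreover obtain a b c where abc: "R_quad p = (a, b, c)"
    by (cases "R_quad p")
  ultimately have q: "q1 = \<kappa> * a\<^sup>2" "q2 = \<kappa> * b\<^sup>2" "q3 = \<kappa> * c\<^sup>2"
    unfolding R_map_eq_squares by (simp_all add: scale3_def)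
  have q1: "csqrt q1 \<noteq> 0"
    using R_degeneracy_nonzero_csqrt(1)[OF assms(1)] .
  then have a: "a \<noteq> 0"
    using q(1) by auto
  define m where "m = csqrt (csqrt q1 / a)"
  have m2: "m\<^sup>2 * a = csqrt q1"
    using a by (simp add: m_def)
  have "(m\<^sup>2 * a)\<^sup>2 = \<kappa> * a\<^sup>2"
    unfolding m2 q(1)[symmetric] by simp
  then have m4: "(m\<^sup>2)\<^sup>2 = \<kappa>"
    using a by (simp add: power_mult_distrib)
  have "(m\<^sup>2 * b)\<^sup>2 = (csqrt q2)\<^sup>2" "(m\<^sup>2 * c)\<^sup>2 = (csqrt q3)\<^sup>2"
    unfolding power_mult_distrib m4 power2_csqrt q by simp_all
  then obtain sb sc where "m\<^sup>2 * b = pm sb * csqrt q2" "m\<^sup>2 * c = pm sc * csqrt q3"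
    using square_eq_square_pm by metis
  then have "R_quad (scale3 m p) = (csqrt q1, pm sb * csqrt q2, pm sc * csqrt q3)"
    unfolding R_quad_scale3 abc using m2 by (simp add: scale3_def)
  moreover have "m \<noteq> 0"
    using m2 q1 by auto
  ultimately show thesis
    using that by blast
qed

lemma R_fiber_covered:
  assumes "R_degeneracy (q1, q2, q3) \<noteq> 0" "p \<noteq> (0, 0, 0)" "(R_map p, (q1, q2, q3)) \<in> proj_rel"
  obtains i where "(p, R_fiber_point (q1, q2, q3) i) \<in> proj_rel"
proof -
  obtain m sb sc where m: "m \<noteq> 0"
    and quad: "R_quad (scale3 m p) = (csqrt q1, pm sb * csqrt q2, pm sc * csqrt q3)"
    using R_preimage_rescale[OF assms(1,3)] .
  obtain d where "scale3 m p = R_quad_inv (csqrt q1) (pm sb * csqrt q2) (pm sc * csqrt q3) d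
      \<or> scale3 m p = scale3 (-1) (R_quad_inv (csqrt q1) (pm sb * csqrt q2) (pm sc * csqrt q3) d)"
    using quad R_degeneracy_nonzero_csqrt(2)[OF assms(1), of sb] by (rule R_quad_fiber)
  then have "scale3 m p = R_fiber_point (q1, q2, q3) (sb, sc, d)
      \<or> scale3 (-1) (scale3 m p) = R_fiber_point (q1, q2, q3) (sb, sc, d)"
    by (elim disjE) (simp_all add: R_fiber_point_def)
  then have "(p, R_fiber_point (q1, q2, q3) (sb, sc, d)) \<in> proj_rel"
  proof
    assume "scale3 m p = R_fiber_point (q1, q2, q3) (sb, sc, d)"
    then show ?thesis
      using proj_rel_scale3[OF assms(2) m] by simp
  next
    assume "scale3 (-1) (scale3 m p) = R_fiber_point (q1, q2, q3) (sb, sc, d)"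
    then show ?thesis
      using proj_rel_scale3[OF assms(2), of "-m"] m by simp
  qed
  then show thesis
    by (rule that)
qed

lemma R_num_preimages:
  assumes "R_degeneracy (q1, q2, q3) \<noteq> 0"
  shows "num_preimages R_map (q1, q2, q3) = 8"
proof -
  have q: "(q1, q2, q3) \<noteq> (0, 0, 0)"
    using assms by (auto simp: R_degeneracy_def)
  have "num_preimages R_map (q1, q2, q3) = card (UNIV :: (bool \<times> bool \<times> bool) set)"
  proof (rule num_preimages_eq_card)
    fix i :: "bool \<times> bool \<times> bool"
    show "R_fiber_point (q1, q2, q3) i
        \<in> {p. p \<noteq> (0, 0, 0) \<and> R_map p \<noteq> (0, 0, 0) \<and> (R_map p, q1, q2, q3) \<in> proj_rel}"
      using R_fiber_point_mem(2,3)[OF assms, of i] proj_rel_refl[OF q] q by simp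
  next
    fix p
    assume "p \<in> {p. p \<noteq> (0, 0, 0) \<and> R_map p \<noteq> (0, 0, 0) \<and> (R_map p, q1, q2, q3) \<in> proj_rel}"
    then show "\<exists>i\<in>UNIV. (p, R_fiber_point (q1, q2, q3) i) \<in> proj_rel"
      by (metis (mono_tags, lifting) R_fiber_covered[OF assms] UNIV_I mem_Collect_eq)
  next
    fix i j :: "bool \<times> bool \<times> bool"
    assume "(R_fiber_point (q1, q2, q3) i, R_fiber_point (q1, q2, q3) j) \<in> proj_rel"
    then show "i = j"
      by (rule R_fiber_point_inj[OF assms])
  qed simp
  then show ?thesis
    by (simp add: card_bool3)
qed

lemma has_top_degree_R: "has_top_degree R_map 8"
proof (rule has_top_degreeI[OF poly3_R_degeneracy])
  show "R_degeneracy (1, 1, 2) \<noteq> 0"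
    by (simp add: R_degeneracy_def)
  show "num_preimages R_map q = 8" if "R_degeneracy q \<noteq> 0" for q
    using that by (cases q) (simp add: R_num_preimages)
qed

section \<open>The map calR\<close>

lemma calR_map_affine:
  "calR_map (z, t, 1) = (z\<^sup>2 * (z\<^sup>2 + t\<^sup>2)\<^sup>2, t\<^sup>2 * (z\<^sup>2 + 1)\<^sup>2, (z\<^sup>2 + t\<^sup>2) * (t\<^sup>2 * z\<^sup>2 + 1))"
  by (simp add: calR_map_def)

lemma calR_map_scale3: "calR_map (scale3 k p) = scale3 (k ^ 6) (calR_map p)"
  by (cases p) (simp add: calR_map_def scale3_def power_mult_distrib algebra_simps power2_eq_square
      eval_nat_numeral)

lemma calR_map_at_infinity:
  assumes "calR_map (Z, T, 0) = (F1, F2, F3)"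
  shows "F1 * F3 - F1 * F2 - F3\<^sup>2 = 0"
  using assms by (simp add: calR_map_def) (auto simp: algebra_simps power2_eq_square eval_nat_numeral)

definition calR_degeneracy :: "pt3 \<Rightarrow> complex" where
  "calR_degeneracy = (\<lambda>(q1, q2, q3). q1 * q2 * q3 * (q3 - q2) * (q1 * (q3 - q2) - q3\<^sup>2)
     * (q1 + q2 - q3) * ((q1 + q3)\<^sup>2 - 4 * q1 * (q3 - q2)))"

lemma poly3_calR_degeneracy: "poly3 calR_degeneracy"
  unfolding calR_degeneracy_def case_prod_unfold by (intro poly3_intros)

text \<open>On the chart \<open>Y = 1\<close>, with \<open>x = z\<^sup>2\<close>, \<open>y = t\<^sup>2\<close> and target \<open>(u, w, 1)\<close>, the quantity
  \<open>\<rho> = x (y - 1) / (x y + 1)\<close> satisfies \<open>\<rho>\<^sup>2 = u (1 - w)\<close> and determines \<open>x\<close> and \<open>y\<close> as below.\<close>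

definition calR_x :: "complex \<Rightarrow> complex \<Rightarrow> complex" where
  "calR_x u \<rho> = (u - \<rho>) / (1 - \<rho>)"

definition calR_y :: "complex \<Rightarrow> complex \<Rightarrow> complex \<Rightarrow> complex" where
  "calR_y u w \<rho> = u * w / ((1 - \<rho>) * (u - \<rho>))"

lemma calR_affine_solution:
  fixes u w \<rho> :: complex
  assumes \<rho>: "\<rho>\<^sup>2 = u * (1 - w)" and u: "u \<noteq> 0" and w: "w \<noteq> 0"
    and nz: "1 - \<rho> \<noteq> 0" "u - \<rho> \<noteq> 0" "1 + u - 2 * \<rho> \<noteq> 0"
  defines "x \<equiv> calR_x u \<rho>" and "y \<equiv> calR_y u w \<rho>"
  shows "x \<noteq> 0" "y \<noteq> 0" "x + y \<noteq> 0" "x * y + 1 \<noteq> 0"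
    "x * (x + y)\<^sup>2 = u * ((x + y) * (y * x + 1))" "y * (x + 1)\<^sup>2 = w * ((x + y) * (y * x + 1))"
    "\<rho> = x * (y - 1) / (x * y + 1)"
proof -
  define a b where "a = 1 - \<rho>" and "b = u - \<rho>"
  have a: "a \<noteq> 0" and b: "b \<noteq> 0" and ab: "a + b \<noteq> 0"
    using nz by (simp_all add: a_def b_def algebra_simps)
  have uw: "u * w = a + b - a\<^sup>2"
    using \<rho> by (simp add: a_def b_def power2_eq_square algebra_simps)
  have uw0: "u * w \<noteq> 0"
    using u w by simp
  have x: "x = b / a" and y: "y = u * w / (a * b)"
    by (simp_all add: x_def y_def calR_x_def calR_y_def a_def b_def)
  have "x + y = (b\<^sup>2 + u * w) / (a * b)"
    unfolding x y using a b by (simp add: field_simps power2_eq_square)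
  also have "b\<^sup>2 + u * w = u * (a + b)"
    unfolding uw by (simp add: a_def b_def power2_eq_square algebra_simps)
  finally have xy: "x + y = u * (a + b) / (a * b)" .
  have xy1: "x * y + 1 = (a + b) / a\<^sup>2"
    unfolding x y using a b uw by (simp add: field_simps power2_eq_square)
  have x1: "x + 1 = (a + b) / a"
    unfolding x using a by (simp add: field_simps)
  show "x \<noteq> 0" "y \<noteq> 0"
    using a b uw0 by (simp_all add: x y)
  show "x + y \<noteq> 0" "x * y + 1 \<noteq> 0"
    unfolding xy xy1 using a b ab u by simp_all
  have "x * (x + y) = u * (y * x + 1)"
    unfolding xy mult.commute[of y x] xy1 unfolding x using a b by (simp add: field_simps power2_eq_square)
  then have "(x + y) * (x * (x + y)) = (x + y) * (u * (y * x + 1))"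
    by simp
  then show "x * (x + y)\<^sup>2 = u * ((x + y) * (y * x + 1))"
    by (simp add: power2_eq_square algebra_simps)
  show "y * (x + 1)\<^sup>2 = w * ((x + y) * (y * x + 1))"
    unfolding x1 xy mult.commute[of y x] xy1 unfolding y using a b by (simp add: field_simps power2_eq_square)
  have "x * (y - 1) = (a + b) * (1 - a) / a\<^sup>2"
    unfolding x y uw using a b by (simp add: field_simps power2_eq_square)
  then show "\<rho> = x * (y - 1) / (x * y + 1)"
    unfolding xy1 using a ab by (simp add: a_def)
qed

lemma calR_affine_solution_unique:
  fixes x y u w :: complex
  assumes xy: "x + y \<noteq> 0" and xy1: "x * y + 1 \<noteq> 0"
    and eq_u: "x * (x + y)\<^sup>2 = u * ((x + y) * (y * x + 1))"
    and eq_w: "y * (x + 1)\<^sup>2 = w * ((x + y) * (y * x + 1))"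
    and u: "u \<noteq> 0" and w: "w \<noteq> 0"
  defines "\<rho> \<equiv> x * (y - 1) / (x * y + 1)"
  shows "\<rho>\<^sup>2 = u * (1 - w)" "x = calR_x u \<rho>" "y = calR_y u w \<rho>"
proof -
  have "(x + y) * (x * (x + y)) = (x + y) * (u * (x * y + 1))"
    using eq_u by (simp add: power2_eq_square algebra_simps)
  then have "x * (x + y) = u * (x * y + 1)"
    using xy by simp
  then have u_eq: "u = x * (x + y) / (x * y + 1)"
    using xy1 by (simp add: field_simps)
  have w_eq: "w = y * (x + 1)\<^sup>2 / ((x + y) * (x * y + 1))"
    unfolding eq_w using xy xy1 by (simp add: mult.commute[of y x])
  have x: "x \<noteq> 0" and x1: "x + 1 \<noteq> 0"
    using u w u_eq w_eq by auto
  have one_rho: "1 - \<rho> = (x + 1) / (x * y + 1)"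
    unfolding \<rho>_def using xy1 by (simp add: field_simps)
  have "u - \<rho> = (x * (x + y) - x * (y - 1)) / (x * y + 1)"
    unfolding \<rho>_def u_eq by (rule diff_divide_distrib[symmetric])
  then have u_rho: "u - \<rho> = x * (x + 1) / (x * y + 1)"
    by (simp add: algebra_simps)
  have "1 - w = ((x + y) * (x * y + 1) - y * (x + 1)\<^sup>2) / ((x + y) * (x * y + 1))"
    unfolding w_eq diff_divide_distrib using xy xy1 by simp
  also have "(x + y) * (x * y + 1) - y * (x + 1)\<^sup>2 = x * (y - 1)\<^sup>2"
    by (simp add: power2_eq_square algebra_simps)
  finally show "\<rho>\<^sup>2 = u * (1 - w)"
    unfolding \<rho>_def u_eq using xy xy1 by (simp add: power2_eq_square)
  have "(x + 1) / (x * y + 1) \<noteq> 0"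
    using x1 xy1 by simp
  then show "x = calR_x u \<rho>"
    unfolding calR_x_def one_rho u_rho by (subst times_divide_eq_right[symmetric]) simp
  have "u * w = (x + y) * (y * (x * (x + 1)\<^sup>2)) / ((x + y) * (x * y + 1)\<^sup>2)"
    unfolding u_eq w_eq by (simp add: power2_eq_square ac_simps)
  also have "\<dots> = y * (x * (x + 1)\<^sup>2 / (x * y + 1)\<^sup>2)"
    using xy by simp
  moreover have "(1 - \<rho>) * (u - \<rho>) = x * (x + 1)\<^sup>2 / (x * y + 1)\<^sup>2"
    unfolding one_rho u_rho by (simp add: field_simps power2_eq_square)
  moreover have "x * (x + 1)\<^sup>2 / (x * y + 1)\<^sup>2 \<noteq> 0"
    using x x1 xy1 by simp
  ultimately show "y = calR_y u w \<rho>"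
    unfolding calR_y_def by simp
qed

lemma calR_degeneracy_nonzero_imp:
  assumes "calR_degeneracy (q1, q2, q3) \<noteq> 0" and \<rho>: "\<rho>\<^sup>2 = q1 / q3 * (1 - q2 / q3)"
  shows "q3 \<noteq> 0" "q1 / q3 \<noteq> 0" "q2 / q3 \<noteq> 0" "\<rho> \<noteq> 0"
    "1 - \<rho> \<noteq> 0" "q1 / q3 - \<rho> \<noteq> 0" "1 + q1 / q3 - 2 * \<rho> \<noteq> 0"
proof -
  have nz: "q1 \<noteq> 0" "q2 \<noteq> 0" "q3 \<noteq> 0" "q3 - q2 \<noteq> 0" "q1 * (q3 - q2) \<noteq> q3\<^sup>2"
    "q1 + q2 - q3 \<noteq> 0" "(q1 + q3)\<^sup>2 \<noteq> 4 * q1 * (q3 - q2)"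
    using assms(1) by (auto simp: calR_degeneracy_def)
  have \<rho>': "q3\<^sup>2 * \<rho>\<^sup>2 = q1 * (q3 - q2)"
    unfolding \<rho> using nz(3) by (simp add: field_simps power2_eq_square)
  show "q3 \<noteq> 0" "q1 / q3 \<noteq> 0" "q2 / q3 \<noteq> 0" "\<rho> \<noteq> 0"
    using nz \<rho>' by auto
  show "1 - \<rho> \<noteq> 0"
    using nz(5) \<rho>' by auto
  show "q1 / q3 - \<rho> \<noteq> 0"
  proof
    assume "q1 / q3 - \<rho> = 0"
    then have "q1\<^sup>2 = q1 * (q3 - q2)"
      using \<rho>' nz(3) by (simp add: field_simps power2_eq_square)
    then have "q1 * (q1 + q2 - q3) = 0"
      by (simp add: power2_eq_square algebra_simps)
    then show False
      using nz(1,6) by simp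
  qed
  show "1 + q1 / q3 - 2 * \<rho> \<noteq> 0"
  proof
    assume "1 + q1 / q3 - 2 * \<rho> = 0"
    then have "(q1 + q3)\<^sup>2 = 4 * (q3\<^sup>2 * \<rho>\<^sup>2)"
      using nz(3) by (simp add: field_simps power2_eq_square)
    then have "(q1 + q3)\<^sup>2 = 4 * (q1 * (q3 - q2))"
      unfolding \<rho>' .
    then show False
      using nz(7) by (simp add: mult.assoc)
  qed
qed

definition calR_fiber_point :: "pt3 \<Rightarrow> bool \<times> bool \<times> bool \<Rightarrow> pt3" where
  "calR_fiber_point = (\<lambda>(q1, q2, q3) (d, sz, st).
     let u = q1 / q3; w = q2 / q3; \<rho> = pm d * csqrt (u * (1 - w))
     in (pm sz * csqrt (calR_x u \<rho>), pm st * csqrt (calR_y u w \<rho>), 1))"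

lemma calR_fiber_point_mem:
  assumes "calR_degeneracy (q1, q2, q3) \<noteq> 0"
  shows "calR_fiber_point (q1, q2, q3) i \<noteq> (0, 0, 0)"
    and "calR_map (calR_fiber_point (q1, q2, q3) i) \<noteq> (0, 0, 0)"
    and "(calR_map (calR_fiber_point (q1, q2, q3) i), (q1, q2, q3)) \<in> proj_rel"
proof -
  obtain d sz st where i: "i = (d, sz, st)"
    by (cases i)
  define u w \<rho> where "u = q1 / q3" and "w = q2 / q3" and "\<rho> = pm d * csqrt (u * (1 - w))"
  have \<rho>2: "\<rho>\<^sup>2 = u * (1 - w)"
    by (simp add: \<rho>_def power_mult_distrib)
  note generic = calR_degeneracy_nonzero_imp[OF assms \<rho>2[unfolded u_def w_def], folded u_def w_def]
  define x y where "x = calR_x u \<rho>" and "y = calR_y u w \<rho>"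
  note sol = calR_affine_solution[OF \<rho>2 generic(2,3,5,6,7), folded x_def y_def]
  define F3 where "F3 = (x + y) * (y * x + 1)"
  have F3: "F3 \<noteq> 0"
    using sol(3,4) by (simp add: F3_def mult.commute)
  have point: "calR_fiber_point (q1, q2, q3) i = (pm sz * csqrt x, pm st * csqrt y, 1)"
    by (simp add: calR_fiber_point_def i Let_def u_def w_def \<rho>_def x_def y_def)
  have "calR_map (calR_fiber_point (q1, q2, q3) i) = (u * F3, w * F3, F3)"
    using sol(5,6) unfolding point calR_map_affine by (simp add: power_mult_distrib F3_def)
  also have "\<dots> = scale3 (F3 / q3) (q1, q2, q3)"
    using generic(1) by (simp add: scale3_def u_def w_def)
  finally have image: "calR_map (calR_fiber_point (q1, q2, q3) i) = scale3 (F3 / q3) (q1, q2, q3)" .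
  show "calR_fiber_point (q1, q2, q3) i \<noteq> (0, 0, 0)"
    by (simp add: point)
  show "calR_map (calR_fiber_point (q1, q2, q3) i) \<noteq> (0, 0, 0)"
    unfolding image using F3 generic(1) by (simp add: scale3_eq_0_iff)
  show "(calR_map (calR_fiber_point (q1, q2, q3) i), (q1, q2, q3)) \<in> proj_rel"
    unfolding image using F3 generic(1) by (intro proj_rel_sym[OF proj_rel_scale3]) auto
qed

lemma calR_fiber_point_inj:
  assumes "calR_degeneracy (q1, q2, q3) \<noteq> 0"
    and "(calR_fiber_point (q1, q2, q3) i, calR_fiber_point (q1, q2, q3) j) \<in> proj_rel"
  shows "i = j"
proof -
  obtain d sz st d' sz' st' where i: "i = (d, sz, st)" and j: "j = (d', sz', st')"
    by (cases i; cases j)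
  obtain k where k: "calR_fiber_point (q1, q2, q3) j = scale3 k (calR_fiber_point (q1, q2, q3) i)"
    using assms(2) unfolding proj_rel_def by blast
  define u w r where "u = q1 / q3" and "w = q2 / q3" and "r = csqrt (u * (1 - w))"
  define \<rho> where "\<rho> b = pm b * r" for b
  have \<rho>2: "(\<rho> b)\<^sup>2 = u * (1 - w)" for b
    by (simp add: \<rho>_def r_def power_mult_distrib)
  note generic = calR_degeneracy_nonzero_imp[OF assms(1) \<rho>2[unfolded u_def w_def], folded u_def w_def]
  define x y where "x b = calR_x u (\<rho> b)" and "y b = calR_y u w (\<rho> b)" for b
  note sol = calR_affine_solution[OF \<rho>2 generic(2,3,5,6,7), folded x_def y_def]
  have point: "calR_fiber_point (q1, q2, q3) (b, s, t) = (pm s * csqrt (x b), pm t * csqrt (y b), 1)" for b s t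
    by (simp add: calR_fiber_point_def Let_def u_def w_def r_def \<rho>_def x_def y_def)
  have "k = 1"
    using k by (simp add: i j point scale3_def)
  then have z: "pm sz' * csqrt (x d') = pm sz * csqrt (x d)" and t: "pm st' * csqrt (y d') = pm st * csqrt (y d)"
    using k by (simp_all add: i j point)
  have "x d' = x d" "y d' = y d"
    using arg_cong[OF z, of "\<lambda>v. v\<^sup>2"] arg_cong[OF t, of "\<lambda>v. v\<^sup>2"] by (simp_all add: power_mult_distrib)
  then have "pm d' * r = pm d * r"
    using sol(7)[of d] sol(7)[of d'] by (simp add: \<rho>_def)
  moreover have "r \<noteq> 0"
    using generic(4)[of True] by (simp add: \<rho>_def)
  ultimately have "d' = d"
    by (rule pm_cancel)
  moreover have "csqrt (x d) \<noteq> 0" "csqrt (y d) \<noteq> 0"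
    using sol(1,2)[of d] by simp_all
  ultimately show "i = j"
    using z t by (auto simp: i j intro: pm_cancel)
qed

lemma calR_preimage_Y_nonzero:
  assumes "calR_degeneracy (q1, q2, q3) \<noteq> 0" "(calR_map (Z, T, Y), (q1, q2, q3)) \<in> proj_rel"
  shows "Y \<noteq> 0"
proof
  assume "Y = 0"
  obtain \<kappa> where \<kappa>: "(q1, q2, q3) = scale3 \<kappa> (calR_map (Z, T, Y))"
    using assms(2) unfolding proj_rel_def by blast
  obtain F1 F2 F3 where F: "calR_map (Z, T, Y) = (F1, F2, F3)"
    by (cases "calR_map (Z, T, Y)")
  have "F1 * F3 - F1 * F2 - F3\<^sup>2 = 0"
    using calR_map_at_infinity F unfolding \<open>Y = 0\<close> by blast
  moreover have "q1 * (q3 - q2) - q3\<^sup>2 = \<kappa>\<^sup>2 * (F1 * F3 - F1 * F2 - F3\<^sup>2)"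
    using \<kappa> F by (simp add: scale3_def algebra_simps power2_eq_square)
  moreover have "q1 * (q3 - q2) - q3\<^sup>2 \<noteq> 0"
    using assms(1) by (auto simp: calR_degeneracy_def)
  ultimately show False
    by simp
qed

lemma calR_fiber_covered:
  assumes "calR_degeneracy (q1, q2, q3) \<noteq> 0" "p \<noteq> (0, 0, 0)" "(calR_map p, (q1, q2, q3)) \<in> proj_rel"
  obtains i where "(p, calR_fiber_point (q1, q2, q3) i) \<in> proj_rel"
proof -
  obtain \<kappa> where \<kappa>: "(q1, q2, q3) = scale3 \<kappa> (calR_map p)"
    using assms(3) unfolding proj_rel_def by blast
  obtain Z T Y where p: "p = (Z, T, Y)"
    by (cases p)
  have "q3 \<noteq> 0"
    using assms(1) by (auto simp: calR_degeneracy_def)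
  have Y: "Y \<noteq> 0"
    using calR_preimage_Y_nonzero assms(1,3) unfolding p by blast
  define z t where "z = Z / Y" and "t = T / Y"
  have p': "scale3 (1 / Y) p = (z, t, 1)"
    using Y by (simp add: p scale3_def z_def t_def)
  define x y where "x = z\<^sup>2" and "y = t\<^sup>2"
  define K where "K = \<kappa> * Y ^ 6"
  have "(q1, q2, q3) = scale3 K (calR_map (scale3 (1 / Y) p))"
    unfolding calR_map_scale3 \<kappa> K_def using Y by (simp add: power_one_over)
  then have q: "q1 = K * (x * (x + y)\<^sup>2)" "q2 = K * (y * (x + 1)\<^sup>2)" "q3 = K * ((x + y) * (y * x + 1))"
    unfolding p' calR_map_affine by (simp_all add: scale3_def x_def y_def)
  define u w where "u = q1 / q3" and "w = q2 / q3"
  have xy: "x + y \<noteq> 0" "x * y + 1 \<noteq> 0"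
    using q(3) \<open>q3 \<noteq> 0\<close> by (auto simp: mult.commute)
  have eqs: "x * (x + y)\<^sup>2 = u * ((x + y) * (y * x + 1))" "y * (x + 1)\<^sup>2 = w * ((x + y) * (y * x + 1))"
    using q \<open>q3 \<noteq> 0\<close> by (simp_all add: u_def w_def)
  have uw: "u \<noteq> 0" "w \<noteq> 0"
    using assms(1) by (auto simp: u_def w_def calR_degeneracy_def)
  note uniq = calR_affine_solution_unique[OF xy eqs uw]
  obtain d where d: "x * (y - 1) / (x * y + 1) = pm d * csqrt (u * (1 - w))"
    using square_eq_pm_csqrt uniq(1) by blast
  obtain sz st where zt: "z = pm sz * csqrt x" "t = pm st * csqrt y"
    using square_eq_pm_csqrt x_def y_def by metis
  have "calR_fiber_point (q1, q2, q3) (d, sz, st) = (pm sz * csqrt (calR_x u (pm d * csqrt (u * (1 - w)))),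
      pm st * csqrt (calR_y u w (pm d * csqrt (u * (1 - w)))), 1)"
    by (simp add: calR_fiber_point_def Let_def u_def w_def)
  also have "\<dots> = scale3 (1 / Y) p"
    unfolding p' zt d[symmetric] uniq(2,3)[symmetric] ..
  finally have "calR_fiber_point (q1, q2, q3) (d, sz, st) = scale3 (1 / Y) p" .
  then have "(p, calR_fiber_point (q1, q2, q3) (d, sz, st)) \<in> proj_rel"
    using proj_rel_scale3[OF assms(2), of "1 / Y"] Y by simp
  then show thesis
    by (rule that)
qed

lemma calR_num_preimages:
  assumes "calR_degeneracy (q1, q2, q3) \<noteq> 0"
  shows "num_preimages calR_map (q1, q2, q3) = 8"
proof -
  have "num_preimages calR_map (q1, q2, q3) = card (UNIV :: (bool \<times> bool \<times> bool) set)"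
  proof (rule num_preimages_eq_card)
    fix i :: "bool \<times> bool \<times> bool"
    show "calR_fiber_point (q1, q2, q3) i
        \<in> {p. p \<noteq> (0, 0, 0) \<and> calR_map p \<noteq> (0, 0, 0) \<and> (calR_map p, q1, q2, q3) \<in> proj_rel}"
      using calR_fiber_point_mem[OF assms, of i] by simp
  next
    fix i j :: "bool \<times> bool \<times> bool"
    assume "(calR_fiber_point (q1, q2, q3) i, calR_fiber_point (q1, q2, q3) j) \<in> proj_rel"
    then show "i = j"
      by (rule calR_fiber_point_inj[OF assms])
  next
    fix p
    assume "p \<in> {p. p \<noteq> (0, 0, 0) \<and> calR_map p \<noteq> (0, 0, 0) \<and> (calR_map p, q1, q2, q3) \<in> proj_rel}"
    then show "\<exists>i\<in>UNIV. (p, calR_fiber_point (q1, q2, q3) i) \<in> proj_rel"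
      by (metis (mono_tags, lifting) calR_fiber_covered[OF assms] UNIV_I mem_Collect_eq)
  qed simp
  then show ?thesis
    by (simp add: card_bool3)
qed

lemma has_top_degree_calR: "has_top_degree calR_map 8"
proof (rule has_top_degreeI[OF poly3_calR_degeneracy])
  show "calR_degeneracy (1, 1, 3) \<noteq> 0"
    by (simp add: calR_degeneracy_def)
  show "num_preimages calR_map q = 8" if "calR_degeneracy q \<noteq> 0" for q
    using that by (cases q) (simp add: calR_num_preimages)
qed

theorem proposition4p3:
  shows "deg_top R_map = 8 \<and> deg_top calR_map = 8"
  using deg_top_eqI[OF has_top_degree_R] deg_top_eqI[OF has_top_degree_calR] by simp

end
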